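(* Let ${\bf i}=(i_n)_{n\ge1}\in\{0,1\}^{\mathbb{N}}$ and define $g_{\bf i}(x)=(1-x)\sum_{n=1}^\infty i_nx^{n-1}$ for $x\in(0,1)$. Then for every integer $k\ge2$ and every $x\in[1-\frac1k,1-\frac1{k+1})$, $|g_{\bf i}'(x)|\le kx^{k-1}$. *)

theory Defs
  imports "HOL-Analysis.Analysis"
begin

definition g_seq :: "(nat \<Rightarrow> nat) \<Rightarrow> real \<Rightarrow> real" where
  "g_seq i x = (1 - x) * (\<Sum>n. real (i (Suc n)) * x ^ n)"

end

theory Submission
  imports Defs
begin

text \<open>Write \<open>d\<^sub>n = n x\<^sup>n\<^sup>-\<^sup>1\<close>. Differentiating \<open>g\<^sub>i\<close> termwise gives
  \<open>g\<^sub>i'(x) = \<Sum> i\<^sub>n\<^sub>+\<^sub>1 (d\<^sub>n - d\<^sub>n\<^sub>+\<^sub>1)\<close>, and for \<open>x\<close> in the given range the weights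
  \<open>d\<^sub>n - d\<^sub>n\<^sub>+\<^sub>1\<close> are nonpositive for \<open>n < k\<close> and nonnegative for \<open>n \<ge> k\<close>. Their sum over
  \<open>n < k\<close> telescopes to \<open>-d\<^sub>k\<close> and their sum over \<open>n \<ge> k\<close> to \<open>d\<^sub>k\<close>, so with coefficients
  in \<open>{0, 1}\<close> the derivative lies in \<open>[-d\<^sub>k, d\<^sub>k]\<close>.\<close>

lemma summable_powser_bounded_coeffs:
  fixes a :: "nat \<Rightarrow> real"
  assumes "\<And>n. \<bar>a n\<bar> \<le> 1" and "\<bar>z\<bar> < 1"
  shows "summable (\<lambda>n. a n * z ^ n)"
proof (rule summable_comparison_test)
  have "\<bar>a n\<bar> * \<bar>z\<bar> ^ n \<le> \<bar>z\<bar> ^ n" for n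
    using mult_right_mono[OF assms(1), of "\<bar>z\<bar> ^ n"] by simp
  then show "\<exists>N. \<forall>n\<ge>N. norm (a n * z ^ n) \<le> \<bar>z\<bar> ^ n"
    by (simp add: abs_mult power_abs)
  show "summable (\<lambda>n. \<bar>z\<bar> ^ n)"
    using assms(2) by (simp add: summable_geometric)
qed

lemma has_field_derivative_one_minus_mult_powser:
  fixes a :: "nat \<Rightarrow> real" and x :: real
  assumes a: "\<And>n. \<bar>a n\<bar> \<le> 1" and x: "\<bar>x\<bar> < 1"
  obtains D where "((\<lambda>y. (1 - y) * (\<Sum>n. a n * y ^ n)) has_field_derivative D) (at x)"
    and "(\<lambda>n. a n * (real n * x ^ (n - 1) - real (Suc n) * x ^ n)) sums D"
proof -
  define d where "d n = real n * x ^ (n - 1)" for n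
  define f where "f y = (\<Sum>n. a n * y ^ n)" for y :: real
  have sm: "summable (\<lambda>n. a n * z ^ n)" if "norm z < 1" for z :: real
    using summable_powser_bounded_coeffs[OF a] that by simp
  define F' where "F' = (\<Sum>n. diffs a n * x ^ n)"
  have "(f has_field_derivative F') (at x)"
    unfolding f_def F'_def using termdiffs_strong'[of 1 a x] sm x by simp
  then have deriv: "((\<lambda>y. (1 - y) * f y) has_field_derivative (1 - x) * F' - f x) (at x)"
    by (auto intro!: derivative_eq_intros)
  have "(\<lambda>n. (1 - x) * (diffs a n * x ^ n) - a (Suc n) * x ^ Suc n)
          sums ((1 - x) * F' - (f x - a 0))"
  proof (intro sums_diff sums_mult)
    show "(\<lambda>n. diffs a n * x ^ n) sums F'"
      unfolding F'_def using termdiff_converges[of x 1 a] sm x by (simp add: summable_sums)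
    show "(\<lambda>n. a (Suc n) * x ^ Suc n) sums (f x - a 0)"
      using summable_sums[OF sm[of x]] x sums_Suc_iff[of "\<lambda>n. a n * x ^ n"]
      by (simp add: f_def)
  qed
  moreover have "(1 - x) * (diffs a n * x ^ n) - a (Suc n) * x ^ Suc n
      = a (Suc n) * (d (Suc n) - d (Suc (Suc n)))" for n
    by (simp add: d_def diffs_def algebra_simps)
  ultimately have "(\<lambda>n. a n * (d n - d (Suc n))) sums ((1 - x) * F' - f x)"
    using sums_Suc_iff[of "\<lambda>n. a n * (d n - d (Suc n))"] by (simp add: d_def)
  with deriv show thesis
    unfolding f_def d_def by (intro that) simp_all
qed

lemma power_deriv_le_Suc:
  fixes x :: real
  assumes "0 \<le> x" and "real n * (1 - x) \<le> x"
  shows "real n * x ^ (n - 1) \<le> real (Suc n) * x ^ n"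
proof (cases n)
  case (Suc m)
  have "x ^ m * real n \<le> x ^ m * ((real n + 1) * x)"
    using assms by (intro mult_left_mono) (auto simp: algebra_simps)
  then show ?thesis
    using Suc by (simp add: algebra_simps)
qed simp

lemma Suc_power_deriv_le:
  fixes x :: real
  assumes "0 < x" and "x \<le> real n * (1 - x)"
  shows "real (Suc n) * x ^ n \<le> real n * x ^ (n - 1)"
proof (cases n)
  case 0
  with assms show ?thesis by simp
next
  case (Suc m)
  have "x ^ m * ((real n + 1) * x) \<le> x ^ m * real n"
    using assms by (intro mult_left_mono) (auto simp: algebra_simps)
  then show ?thesis
    using Suc by (simp add: algebra_simps)
qed

lemma mult_one_minus_le_of_less:
  fixes x :: real
  assumes "n < k" and "1 - 1 / real k \<le> x" and "x \<le> 1"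
  shows "real n * (1 - x) \<le> x"
proof -
  have "real n * (1 - x) \<le> (real k - 1) * (1 / real k)"
    using assms by (intro mult_mono) auto
  also have "\<dots> = 1 - 1 / real k"
    using assms(1) by (simp add: field_simps)
  finally show ?thesis
    using assms(2) by linarith
qed

lemma le_mult_one_minus_of_le:
  fixes x :: real
  assumes "k \<le> n" and "x < 1 - 1 / real (k + 1)"
  shows "x \<le> real n * (1 - x)"
proof -
  have "1 - 1 / real (k + 1) = real k * (1 / real (k + 1))"
    by (simp add: field_simps)
  also have "\<dots> \<le> real n * (1 - x)"
    using assms by (intro mult_mono) auto
  finally show ?thesis
    using assms(2) by linarith
qed

lemma sums_power_deriv_telescope_tail:
  fixes x :: real
  assumes "\<bar>x\<bar> < 1"
  shows "(\<lambda>n. real (n + k) * x ^ (n + k - 1) - real (Suc (n + k)) * x ^ (n + k))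
           sums (real k * x ^ (k - 1))"
proof -
  have "(\<lambda>n. real n * x ^ n + x ^ n) \<longlonglongrightarrow> 0 + 0"
    using assms by (intro tendsto_add powser_times_n_limit_0 LIMSEQ_power_zero) auto
  then have "(\<lambda>n. real (Suc n) * x ^ (Suc n - 1)) \<longlonglongrightarrow> 0"
    by (simp add: algebra_simps)
  then have "(\<lambda>n. real n * x ^ (n - 1)) \<longlonglongrightarrow> 0"
    by (rule LIMSEQ_imp_Suc)
  then have "(\<lambda>n. real (n + k) * x ^ (n + k - 1)) \<longlonglongrightarrow> 0"
    by (rule LIMSEQ_ignore_initial_segment[where k = k, simplified])
  from telescope_sums'[OF this] show ?thesis
    by simp
qed

lemma sum_power_deriv_telescope:
  fixes x :: real
  shows "(\<Sum>n<k. real n * x ^ (n - 1) - real (Suc n) * x ^ n) = - (real k * x ^ (k - 1))"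
  using sum_lessThan_telescope'[of "\<lambda>n. real n * x ^ (n - 1)" k] by simp

lemma abs_sums_le_of_sign_change:
  fixes a c :: "nat \<Rightarrow> real"
  assumes sums: "(\<lambda>n. a n * c n) sums D"
    and a: "\<And>n. 0 \<le> a n" "\<And>n. a n \<le> 1"
    and c_head: "\<And>n. n < k \<Longrightarrow> c n \<le> 0" and c_tail: "\<And>n. k \<le> n \<Longrightarrow> 0 \<le> c n"
    and head_sum: "(\<Sum>n<k. c n) = - S" and tail_sums: "(\<lambda>n. c (n + k)) sums S"
  shows "\<bar>D\<bar> \<le> S"
proof -
  have summ: "summable (\<lambda>n. a (n + k) * c (n + k))"
    using summable_ignore_initial_segment[OF sums_summable[OF sums]] by simp
  have D_split: "D = (\<Sum>n. a (n + k) * c (n + k)) + (\<Sum>n<k. a n * c n)"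
    using suminf_split_initial_segment[OF sums_summable[OF sums], of k] sums_unique[OF sums]
    by simp
  have "(\<Sum>n. a (n + k) * c (n + k)) \<le> (\<Sum>n. c (n + k))"
    using a c_tail summ sums_summable[OF tail_sums]
    by (intro suminf_le) (auto intro: mult_left_le_one_le)
  moreover have "0 \<le> (\<Sum>n. a (n + k) * c (n + k))"
    using a c_tail summ by (intro suminf_nonneg) auto
  moreover have "(\<Sum>n<k. a n * c n) \<le> 0"
    using a c_head by (intro sum_nonpos) (simp add: mult_nonneg_nonpos)
  moreover have "(\<Sum>n<k. c n) \<le> (\<Sum>n<k. a n * c n)"
  proof (intro sum_mono)
    fix n assume "n \<in> {..<k}"
    then have "(1 - a n) * c n \<le> 0"
      using a c_head by (simp add: mult_nonneg_nonpos)
    then show "c n \<le> a n * c n"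
      by (simp add: algebra_simps)
  qed
  ultimately show ?thesis
    using D_split head_sum sums_unique[OF tail_sums] by linarith
qed

theorem lemma5p3:
  fixes i :: "nat \<Rightarrow> nat" and k :: nat and x :: real
  assumes "\<forall>n\<ge>1. i n \<in> {0, 1}"
    and "k \<ge> 2"
    and "1 - 1 / real k \<le> x" and "x < 1 - 1 / real (k + 1)"
  shows "g_seq i differentiable (at x) \<and> \<bar>deriv (g_seq i) x\<bar> \<le> real k * x ^ (k - 1)"
proof -
  define a where "a n = real (i (Suc n))" for n
  have a01: "0 \<le> a n" "a n \<le> 1" for n
    using assms(1)[rule_format, of "Suc n"] by (auto simp: a_def)
  have "1 / real k \<le> 1 / 2" and "0 < 1 / real (k + 1)"
    using assms(2) by (auto simp: field_simps)
  then have x: "0 < x" "x < 1"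
    using assms(3,4) by linarith+
  have a_abs: "\<bar>a n\<bar> \<le> 1" for n
    using a01[of n] by simp
  have x_abs: "\<bar>x\<bar> < 1"
    using x by simp
  obtain D
    where deriv: "((\<lambda>y. (1 - y) * (\<Sum>n. a n * y ^ n)) has_field_derivative D) (at x)"
      and sums: "(\<lambda>n. a n * (real n * x ^ (n - 1) - real (Suc n) * x ^ n)) sums D"
    using has_field_derivative_one_minus_mult_powser[OF a_abs x_abs] .
  have "g_seq i = (\<lambda>y. (1 - y) * (\<Sum>n. a n * y ^ n))"
    by (simp add: g_seq_def a_def fun_eq_iff)
  with deriv have deriv: "(g_seq i has_field_derivative D) (at x)"
    by simp
  have head: "real n * x ^ (n - 1) - real (Suc n) * x ^ n \<le> 0" if "n < k" for n
    using power_deriv_le_Suc[OF _ mult_one_minus_le_of_less[OF that assms(3)]] x by simp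
  have tail: "0 \<le> real n * x ^ (n - 1) - real (Suc n) * x ^ n" if "k \<le> n" for n
    using Suc_power_deriv_le[OF _ le_mult_one_minus_of_le[OF that assms(4)]] x by simp
  have "\<bar>D\<bar> \<le> real k * x ^ (k - 1)"
    using abs_sums_le_of_sign_change[OF sums a01 head tail sum_power_deriv_telescope
        sums_power_deriv_telescope_tail[OF x_abs]] .
  moreover have "g_seq i differentiable (at x)"
    using deriv field_differentiable_def field_differentiable_imp_differentiable by blast
  ultimately show ?thesis
    using DERIV_imp_deriv[OF deriv] by simp
qed

end
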